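(* Let $G$, $H\sqsubseteq G$, the local supervisors $I=\{1,\dots,n\}$ with observable sets $\Sigma_{o,i}$, controllable sets $\Sigma_{c,i}$ and delay bounds $N_{o,i}\in\mathbb{N}$ be as described in the context, and let $\sigma\in\Sigma_c$. Then $\mathcal{L}(H)$ is delay coobservable w.r.t. $N_{o,1},\ldots,N_{o,n}$, $\sigma$, and $\mathcal{L}(G)$ if and only if the following holds: for every $s\in\mathcal{L}(H)$ with $s\sigma\in\mathcal{L}(G)\setminus\mathcal{L}(H)$, and for every tuple $(s_i)_{i\in I^c(\sigma)}\in\mathcal{T}^{\sigma}_{conf}(s)$, there exists $i\in I^c(\sigma)$ such that $s_i\sigma\notin\mathcal{L}(H^{aug}_{N_{o,i}})$.
   Context: $G=(Q,\Sigma,\delta,\Gamma,q_0,Q_m)$ is a deterministic finite automaton with finite state set $Q$, finite event set $\Sigma$, partial transition function $\delta$ (extended to strings as usual), active event sets $\Gamma(q)=\{e\in\Sigma:\delta(q,e)\text{ defined}\}$, initial state $q_0$; $\mathcal{L}(G)$ is its generated language. $H=(Q_H,\Sigma,\delta_H,\Gamma_H,q_0,Q_{m,H})$ is a sub-automaton of $G$ (obtained from $G$ by deleting some states and all transitions attached to them); $\mathcal{L}(H)$ is the specification language. For a string $s$, $|s|$ is its length, $s_{-m}$ is the prefix of $s$ of length $\max\{0,|s|-m\}$, and $\Sigma^{\le M}$ is the set of strings of length at most $M$. There are $n$ local supervisors indexed by $I=\{1,\dots,n\}$; supervisor $i$ has observable events $\Sigma_{o,i}\subseteq\Sigma$, unobservable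 events $\Sigma_{uo,i}=\Sigma\setminus\Sigma_{o,i}$, controllable events $\Sigma_{c,i}\subseteq\Sigma$, and an observation delay bound $N_{o,i}\in\mathbb{N}$; $\Sigma_c=\bigcup_i\Sigma_{c,i}$, and for $\sigma\in\Sigma_c$, $I^c(\sigma)=\{i\in I:\sigma\in\Sigma_{c,i}\}$. $P_i$ is the natural projection onto $\Sigma_{o,i}^*$ (erasing events not in $\Sigma_{o,i}$). For $s\in\mathcal{L}(G)$, $\Theta_i^{N_{o,i}}(s)=\{P_i(s_{-m}):m\in[0,N_{o,i}]\}$; for $t\in\Sigma_{o,i}^*$, $(\Theta_i^{N_{o,i}})^{-1}(t)=\{u\in\mathcal{L}(G):t\in\Theta_i^{N_{o,i}}(u)\}$, both extended to sets elementwise. $\mathcal{L}(H)$ is delay coobservable w.r.t. $N_{o,1},\dots,N_{o,n}$, $\sigma\in\Sigma_c$, and $\mathcal{L}(G)$ if for every $s\in\mathcal{L}(H)$: $s\sigma\in\mathcal{L}(G)\setminus\mathcal{L}(H)$ implies that there exists $i\in I^c(\sigma)$ with $(\Theta_i^{N_{o,i}})^{-1}(\Theta_i^{N_{o,i}}(s))\sigma\cap\mathcal{L}(H)=\emptyset$. The augmented automaton $H^{aug}_{N}$ (for $N\in\mathbb{N}$) has states $Q_H\cup\{q_{dis}\}$, initial state $q_0$, and transitions: for $q\in Q_H$, $e\in\Sigma$, $\delta^{aug}(q,e)=\delta_H(q,e)$ if $e\in\Gamma_H(q)$; $\delta^{aug}(q,e)=q_{dis}$ if $e\notin\Gamma_H(q)$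 and there is $s'\in\Sigma^{\le N}$ with $\delta_H(q,s')$ defined and $e\in\Gamma_H(\delta_H(q,s'))$; undefined otherwise (no transitions leave $q_{dis}$). For $s\in\mathcal{L}(H)$ and $\sigma\in\Sigma_c$, $\mathcal{T}^{\sigma}_{conf}(s)$ is the set of tuples $(s_i)_{i\in I^c(\sigma)}$ of strings with $P_i(s_i)\in\Theta_i^{N_{o,i}}(s)$ for all $i\in I^c(\sigma)$. *)

theory Defs
  imports Main
begin

fun delta_star :: "('q \<Rightarrow> 'e \<Rightarrow> 'q option) \<Rightarrow> 'q \<Rightarrow> 'e list \<Rightarrow> 'q option" where
  "delta_star d q [] = Some q"
| "delta_star d q (e # s) = (case d q e of None \<Rightarrow> None | Some q' \<Rightarrow> delta_star d q' s)"

definition lang :: "('q \<Rightarrow> 'e \<Rightarrow> 'q option) \<Rightarrow> 'q \<Rightarrow> 'e list set" where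
  "lang d q0 = {s. delta_star d q0 s \<noteq> None}"

definition active :: "('q \<Rightarrow> 'e \<Rightarrow> 'q option) \<Rightarrow> 'q \<Rightarrow> 'e set" where
  "active d q = {e. d q e \<noteq> None}"

(* deterministic finite automaton (Q, Sig, delta, q0); marked states play no role here *)
definition dfa :: "'q set \<Rightarrow> 'e set \<Rightarrow> ('q \<Rightarrow> 'e \<Rightarrow> 'q option) \<Rightarrow> 'q \<Rightarrow> bool" where
  "dfa Q Sig d q0 \<longleftrightarrow> finite Q \<and> finite Sig \<and> q0 \<in> Q \<and>
     (\<forall>q e q'. d q e = Some q' \<longrightarrow> q \<in> Q \<and> e \<in> Sig \<and> q' \<in> Q)"

definition sub_delta :: "('q \<Rightarrow> 'e \<Rightarrow> 'q option) \<Rightarrow> 'q set \<Rightarrow> 'q \<Rightarrow> 'e \<Rightarrow> 'q option" where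
  "sub_delta d QH q e = (case d q e of None \<Rightarrow> None
       | Some q' \<Rightarrow> (if q \<in> QH \<and> q' \<in> QH then Some q' else None))"

(* augmented automaton H^aug_N : states Some q (q in QH) and None = q_dis *)
definition aug_delta :: "'e set \<Rightarrow> ('q \<Rightarrow> 'e \<Rightarrow> 'q option) \<Rightarrow> 'q set \<Rightarrow> nat
                          \<Rightarrow> 'q option \<Rightarrow> 'e \<Rightarrow> 'q option option" where
  "aug_delta Sig dH QH N x e = (case x of
      None \<Rightarrow> None
    | Some q \<Rightarrow>
        (if q \<in> QH \<and> e \<in> Sig then
           (if e \<in> active dH q then map_option Some (dH q e)
            else if (\<exists>s' \<in> lists Sig. length s' \<le> N \<and>
                       (\<exists>q'. delta_star dH q s' = Some q' \<and> e \<in> active dH q'))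
                 then Some None else None)
         else None))"

definition aug_lang :: "'e set \<Rightarrow> ('q \<Rightarrow> 'e \<Rightarrow> 'q option) \<Rightarrow> 'q set \<Rightarrow> nat \<Rightarrow> 'q \<Rightarrow> 'e list set" where
  "aug_lang Sig dH QH N q0 = lang (aug_delta Sig dH QH N) (Some q0)"

definition proj :: "'e set \<Rightarrow> 'e list \<Rightarrow> 'e list" where
  "proj A s = filter (\<lambda>e. e \<in> A) s"

definition trunc :: "'e list \<Rightarrow> nat \<Rightarrow> 'e list" where
  "trunc s m = take (length s - m) s"

definition Theta :: "'e set \<Rightarrow> nat \<Rightarrow> 'e list \<Rightarrow> 'e list set" where
  "Theta A N s = {proj A (trunc s m) | m. m \<le> N}"

definition Theta_inv :: "'e list set \<Rightarrow> 'e set \<Rightarrow> nat \<Rightarrow> 'e list set \<Rightarrow> 'e list set" where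
  "Theta_inv LG A N T = (\<Union>t\<in>T. {u \<in> LG. t \<in> Theta A N u})"

definition append_ev :: "'e list set \<Rightarrow> 'e \<Rightarrow> 'e list set" where
  "append_ev K \<sigma> = {u @ [\<sigma>] | u. u \<in> K}"

definition Ic :: "nat \<Rightarrow> (nat \<Rightarrow> 'e set) \<Rightarrow> 'e \<Rightarrow> nat set" where
  "Ic n Sc \<sigma> = {i \<in> {1..n}. \<sigma> \<in> Sc i}"

definition delay_coobservable ::
  "'e list set \<Rightarrow> 'e list set \<Rightarrow> nat \<Rightarrow> (nat \<Rightarrow> 'e set) \<Rightarrow> (nat \<Rightarrow> 'e set) \<Rightarrow> (nat \<Rightarrow> nat) \<Rightarrow> 'e \<Rightarrow> bool" where
  "delay_coobservable LH LG n So Sc No \<sigma> \<longleftrightarrow>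
     (\<forall>s \<in> LH. s @ [\<sigma>] \<in> LG - LH \<longrightarrow>
        (\<exists>i \<in> Ic n Sc \<sigma>.
           append_ev (Theta_inv LG (So i) (No i) (Theta (So i) (No i) s)) \<sigma> \<inter> LH = {}))"

(* T^sigma_conf(s): tuples (s_i)_{i in I^c(sigma)} of strings over Sig, represented by functions nat => string
   (values outside I^c(sigma) are irrelevant) *)
definition T_conf :: "'e set \<Rightarrow> nat \<Rightarrow> (nat \<Rightarrow> 'e set) \<Rightarrow> (nat \<Rightarrow> 'e set) \<Rightarrow> (nat \<Rightarrow> nat) \<Rightarrow> 'e \<Rightarrow> 'e list
                     \<Rightarrow> (nat \<Rightarrow> 'e list) set" where
  "T_conf Sig n So Sc No \<sigma> s =
     {t. \<forall>i \<in> Ic n Sc \<sigma>. t i \<in> lists Sig \<and> proj (So i) (t i) \<in> Theta (So i) (No i) s}"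

end

theory Submission
  imports Defs
begin

(* For supervisor i, a confusable string u with u @ [\<sigma>] in L(H) splits as u = x @ w with
   |w| \<le> N_{o,i} and P_i(x) an observation of s. So delay coobservability fails for i exactly when
   some x whose projection is an observation of s admits \<sigma> in L(H) within N_{o,i} further events,
   and these x are precisely the strings that H^aug_{N_{o,i}} accepts before \<sigma> (through q_dis if
   \<sigma> is only enabled later). Choosing one such x for every i turns a failure of coobservability
   into a tuple of T_conf(s) accepted by all augmented automata, and conversely. *)

definition enabled_within :: "'e list set \<Rightarrow> nat \<Rightarrow> 'e \<Rightarrow> 'e list set" where
  "enabled_within L N \<sigma> = {x. \<exists>w. length w \<le> N \<and> x @ w @ [\<sigma>] \<in> L}"

lemma delta_star_append:
  "delta_star d q (s @ t) = (case delta_star d q s of None \<Rightarrow> None | Some q' \<Rightarrow> delta_star d q' t)"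
  by (induction s arbitrary: q) (auto split: option.splits)

lemma delta_star_append_defined_iff:
  "delta_star d q (s @ t) \<noteq> None \<longleftrightarrow> (\<exists>q'. delta_star d q s = Some q' \<and> delta_star d q' t \<noteq> None)"
  by (auto simp: delta_star_append split: option.splits)

lemma delta_star_snoc_defined_iff:
  "delta_star d q (s @ [e]) \<noteq> None \<longleftrightarrow> (\<exists>q'. delta_star d q s = Some q' \<and> d q' e \<noteq> None)"
  unfolding delta_star_append_defined_iff by (auto split: option.splits)

lemma lang_prefix_closed: "u @ v \<in> lang d q \<Longrightarrow> u \<in> lang d q"
  by (auto simp: lang_def delta_star_append split: option.splits)

lemma delta_star_sub_delta:
  "delta_star (sub_delta d QH) q s = Some q' \<Longrightarrow> delta_star d q s = Some q'"
  by (induction s arbitrary: q) (auto simp: sub_delta_def split: option.splits if_splits)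

lemma lang_sub_delta_subset: "lang (sub_delta d QH) q \<subseteq> lang d q"
  unfolding lang_def using delta_star_sub_delta by fastforce

lemma sub_delta_closed:
  assumes "dfa Q Sig d q0" and "sub_delta d QH q e = Some q'"
  shows "e \<in> Sig \<and> q' \<in> QH"
  using assms by (auto simp: dfa_def sub_delta_def split: option.splits if_splits)

lemma enabled_within_lists:
  "L \<subseteq> lists Sig \<Longrightarrow> x \<in> enabled_within L N \<sigma> \<Longrightarrow> x \<in> lists Sig"
  by (auto simp: enabled_within_def)

context
  fixes Sig :: "'e set" and dH :: "'q \<Rightarrow> 'e \<Rightarrow> 'q option" and QH :: "'q set"
  assumes closed: "\<And>q e q'. dH q e = Some q' \<Longrightarrow> e \<in> Sig \<and> q' \<in> QH"
begin

lemma delta_star_closed_lists: "delta_star dH q s = Some q' \<Longrightarrow> s \<in> lists Sig"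
  by (induction s arbitrary: q) (auto dest: closed split: option.splits)

lemma delta_star_closed_target: "q \<in> QH \<Longrightarrow> delta_star dH q s = Some q' \<Longrightarrow> q' \<in> QH"
  by (induction s arbitrary: q) (auto dest: closed split: option.splits)

lemma lang_closed_lists: "lang dH q \<subseteq> lists Sig"
  unfolding lang_def using delta_star_closed_lists by blast

lemma aug_delta_Some_Some_iff:
  "q \<in> QH \<Longrightarrow> aug_delta Sig dH QH N (Some q) e = Some (Some q') \<longleftrightarrow> dH q e = Some q'"
  by (auto simp: aug_delta_def active_def dest: closed split: if_splits)

lemma aug_delta_enabled_iff:
  assumes "q \<in> QH"
  shows "aug_delta Sig dH QH N (Some q) \<sigma> \<noteq> None \<longleftrightarrow>
    (\<exists>w. length w \<le> N \<and> delta_star dH q (w @ [\<sigma>]) \<noteq> None)"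
proof
  assume "aug_delta Sig dH QH N (Some q) \<sigma> \<noteq> None"
  then consider "\<sigma> \<in> active dH q"
    | "\<exists>w \<in> lists Sig. length w \<le> N \<and> (\<exists>q'. delta_star dH q w = Some q' \<and> \<sigma> \<in> active dH q')"
    by (auto simp: aug_delta_def split: if_splits)
  then show "\<exists>w. length w \<le> N \<and> delta_star dH q (w @ [\<sigma>]) \<noteq> None"
  proof cases
    case 1
    then show ?thesis by (intro exI[of _ "[]"]) (auto simp: active_def split: option.splits)
  next
    case 2
    then show ?thesis by (auto simp: delta_star_append active_def split: option.splits)
  qed
next
  assume "\<exists>w. length w \<le> N \<and> delta_star dH q (w @ [\<sigma>]) \<noteq> None"
  then obtain w q' where w: "length w \<le> N" "delta_star dH q w = Some q'" "\<sigma> \<in> active dH q'"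
    by (auto simp: delta_star_append active_def split: option.splits)
  obtain q'' where "dH q' \<sigma> = Some q''"
    using w(3) by (auto simp: active_def)
  then have "\<sigma> \<in> Sig" using closed by blast
  moreover have "w \<in> lists Sig" using delta_star_closed_lists[OF w(2)] .
  ultimately show "aug_delta Sig dH QH N (Some q) \<sigma> \<noteq> None"
    using assms w by (auto simp: aug_delta_def active_def)
qed

lemma delta_star_aug_delta_Some_iff:
  "q \<in> QH \<Longrightarrow> delta_star (aug_delta Sig dH QH N) (Some q) s = Some (Some q') \<longleftrightarrow>
    delta_star dH q s = Some q'"
proof (induction s arbitrary: q)
  case Nil
  then show ?case by simp
next
  case (Cons e s)
  have from_dis: "delta_star (aug_delta Sig dH QH N) None s \<noteq> Some (Some q')"
    by (cases s) (auto simp: aug_delta_def)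
  show ?case
  proof (cases "dH q e")
    case None
    then have "aug_delta Sig dH QH N (Some q) e \<in> {None, Some None}"
      by (auto simp: aug_delta_def active_def)
    with None from_dis show ?thesis by auto
  next
    case (Some q1)
    then have "q1 \<in> QH" using closed by blast
    moreover have "aug_delta Sig dH QH N (Some q) e = Some (Some q1)"
      using Some Cons.prems by (simp add: aug_delta_Some_Some_iff)
    ultimately show ?thesis using Some Cons.IH by simp
  qed
qed

lemma snoc_in_aug_lang_iff:
  assumes "q0 \<in> QH"
  shows "x @ [\<sigma>] \<in> aug_lang Sig dH QH N q0 \<longleftrightarrow> x \<in> enabled_within (lang dH q0) N \<sigma>"
proof -
  have dis_stuck: "aug_delta Sig dH QH N None \<sigma> = None"
    by (simp add: aug_delta_def)
  have "x @ [\<sigma>] \<in> aug_lang Sig dH QH N q0 \<longleftrightarrow>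
      (\<exists>y. delta_star (aug_delta Sig dH QH N) (Some q0) x = Some y \<and>
           aug_delta Sig dH QH N y \<sigma> \<noteq> None)"
    unfolding aug_lang_def lang_def mem_Collect_eq delta_star_snoc_defined_iff ..
  also have "\<dots> \<longleftrightarrow>
      (\<exists>q. delta_star (aug_delta Sig dH QH N) (Some q0) x = Some (Some q) \<and>
           aug_delta Sig dH QH N (Some q) \<sigma> \<noteq> None)"
    using dis_stuck by (metis not_None_eq)
  also have "\<dots> \<longleftrightarrow> (\<exists>q. delta_star dH q0 x = Some q \<and>
      (\<exists>w. length w \<le> N \<and> delta_star dH q (w @ [\<sigma>]) \<noteq> None))"
    using assms delta_star_aug_delta_Some_iff aug_delta_enabled_iff
      delta_star_closed_target by meson
  also have "\<dots> \<longleftrightarrow> x \<in> enabled_within (lang dH q0) N \<sigma>"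
    unfolding enabled_within_def lang_def mem_Collect_eq delta_star_append_defined_iff by blast
  finally show ?thesis .
qed

end

lemma confusable_extension_iff:
  assumes "LH \<subseteq> LG" and "\<And>u v. u @ v \<in> LG \<Longrightarrow> u \<in> LG"
  shows "append_ev (Theta_inv LG A N T) \<sigma> \<inter> LH \<noteq> {} \<longleftrightarrow>
    (\<exists>x. proj A x \<in> T \<and> x \<in> enabled_within LH N \<sigma>)"
proof
  assume "append_ev (Theta_inv LG A N T) \<sigma> \<inter> LH \<noteq> {}"
  then obtain u m where u: "u @ [\<sigma>] \<in> LH" "m \<le> N" "proj A (trunc u m) \<in> T"
    by (auto simp: append_ev_def Theta_inv_def Theta_def)
  define x w where "x = trunc u m" and "w = drop (length u - m) u"
  have "u = x @ w" by (simp add: x_def w_def trunc_def)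
  moreover have "length w \<le> N" using u(2) by (simp add: w_def)
  ultimately have "x \<in> enabled_within LH N \<sigma>"
    using u(1) unfolding enabled_within_def by auto
  with u(3) show "\<exists>x. proj A x \<in> T \<and> x \<in> enabled_within LH N \<sigma>"
    unfolding x_def by blast
next
  assume "\<exists>x. proj A x \<in> T \<and> x \<in> enabled_within LH N \<sigma>"
  then obtain x w where x: "proj A x \<in> T" "length w \<le> N" "x @ w @ [\<sigma>] \<in> LH"
    by (auto simp: enabled_within_def)
  then have "x @ w \<in> LG" using assms by (metis append_assoc subsetD)
  moreover have "proj A x \<in> Theta A N (x @ w)"
    unfolding Theta_def trunc_def using x(2) by force
  ultimately have "(x @ w) @ [\<sigma>] \<in> append_ev (Theta_inv LG A N T) \<sigma>"
    using x(1) by (auto simp: append_ev_def Theta_inv_def)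
  with x(3) show "append_ev (Theta_inv LG A N T) \<sigma> \<inter> LH \<noteq> {}" by auto
qed

lemma bex_all_not_iff_all_choice:
  "(\<exists>i\<in>I. \<forall>x. P i x \<longrightarrow> \<not> R i x) \<longleftrightarrow> (\<forall>t. (\<forall>i\<in>I. P i (t i)) \<longrightarrow> (\<exists>i\<in>I. \<not> R i (t i)))"
proof
  assume "\<exists>i\<in>I. \<forall>x. P i x \<longrightarrow> \<not> R i x"
  then show "\<forall>t. (\<forall>i\<in>I. P i (t i)) \<longrightarrow> (\<exists>i\<in>I. \<not> R i (t i))" by blast
next
  assume choices: "\<forall>t. (\<forall>i\<in>I. P i (t i)) \<longrightarrow> (\<exists>i\<in>I. \<not> R i (t i))"
  show "\<exists>i\<in>I. \<forall>x. P i x \<longrightarrow> \<not> R i x"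
  proof (rule ccontr)
    assume "\<not> ?thesis"
    then have "\<forall>i\<in>I. \<exists>x. P i x \<and> R i x" by blast
    from bchoice[OF this] obtain t where "\<forall>i\<in>I. P i (t i) \<and> R i (t i)" by blast
    with choices show False by blast
  qed
qed

theorem theorem1:
  fixes Q :: "'q set" and Sig :: "'e set" and d :: "'q \<Rightarrow> 'e \<Rightarrow> 'q option" and q0 :: 'q
    and QH :: "'q set" and n :: nat and So Sc :: "nat \<Rightarrow> 'e set" and No :: "nat \<Rightarrow> nat"
    and \<sigma> :: 'e
  assumes "dfa Q Sig d q0"
    and "QH \<subseteq> Q" and "q0 \<in> QH"
    and "\<forall>i \<in> {1..n}. So i \<subseteq> Sig \<and> Sc i \<subseteq> Sig"
    and "\<sigma> \<in> (\<Union>i \<in> {1..n}. Sc i)"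
  shows "delay_coobservable (lang (sub_delta d QH) q0) (lang d q0) n So Sc No \<sigma> \<longleftrightarrow>
    (\<forall>s \<in> lang (sub_delta d QH) q0.
       s @ [\<sigma>] \<in> lang d q0 - lang (sub_delta d QH) q0 \<longrightarrow>
       (\<forall>t \<in> T_conf Sig n So Sc No \<sigma> s.
          \<exists>i \<in> Ic n Sc \<sigma>. t i @ [\<sigma>] \<notin> aug_lang Sig (sub_delta d QH) QH (No i) q0))"
proof -
  let ?LH = "lang (sub_delta d QH) q0"
  have closed: "\<And>q e q'. sub_delta d QH q e = Some q' \<Longrightarrow> e \<in> Sig \<and> q' \<in> QH"
    using sub_delta_closed[OF assms(1)] by blast
  have aug: "x @ [\<sigma>] \<in> aug_lang Sig (sub_delta d QH) QH N q0 \<longleftrightarrow> x \<in> enabled_within ?LH N \<sigma>"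
    for x N using snoc_in_aug_lang_iff[OF closed assms(3)] .
  have violation_iff: "append_ev (Theta_inv (lang d q0) A N T) \<sigma> \<inter> ?LH \<noteq> {} \<longleftrightarrow>
      (\<exists>x. proj A x \<in> T \<and> x \<in> enabled_within ?LH N \<sigma>)" for A N T
    by (rule confusable_extension_iff[OF lang_sub_delta_subset]) (rule lang_prefix_closed)
  have enabled_lists: "x \<in> lists Sig" if "x \<in> enabled_within ?LH N \<sigma>" for x N
    using enabled_within_lists[OF lang_closed_lists[where dH = "sub_delta d QH", OF closed] that] .
  have no_violation:
    "append_ev (Theta_inv (lang d q0) (So i) (No i) (Theta (So i) (No i) s)) \<sigma> \<inter> ?LH = {} \<longleftrightarrow>
     (\<forall>x. x \<in> lists Sig \<and> proj (So i) x \<in> Theta (So i) (No i) s \<longrightarrow>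
          \<not> x @ [\<sigma>] \<in> aug_lang Sig (sub_delta d QH) QH (No i) q0)" for i s
    unfolding aug using violation_iff[of "So i" "No i" "Theta (So i) (No i) s"] enabled_lists
    by blast
  show ?thesis
    unfolding delay_coobservable_def no_violation bex_all_not_iff_all_choice T_conf_def
    by simp
qed

end
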